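(* Let $T$ be a countably infinite tournament. Then either $T$ has a quasi-kernel, or there exist vertices $x,y\in V(T)$ such that $V(T)=\Gamma^-(x)\cup\Gamma^+(y)$.
   Context: A tournament is a digraph in which every pair of distinct vertices is joined by exactly one directed edge. $\Gamma^+(v)$ and $\Gamma^-(v)$ denote the sets of out-neighbours and in-neighbours of $v$; for a vertex set $V'$, $\Gamma^+(V')$ is the union of the out-neighbourhoods of its vertices and $\Gamma^+_2(V')=V'\cup\Gamma^+(V')\cup\Gamma^+(\Gamma^+(V'))$. A quasi-kernel is an independent set $Q$ with $\Gamma^+_2(Q)=V(T)$. *)

theory Defs
  imports Main "HOL-Library.Countable_Set"
begin

definition tournament :: "'a set \<Rightarrow> ('a \<Rightarrow> 'a \<Rightarrow> bool) \<Rightarrow> bool" where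
  "tournament V E \<longleftrightarrow>
     (\<forall>u v. E u v \<longrightarrow> u \<in> V \<and> v \<in> V) \<and>
     (\<forall>v. \<not> E v v) \<and>
     (\<forall>u\<in>V. \<forall>v\<in>V. u \<noteq> v \<longrightarrow> (E u v \<longleftrightarrow> \<not> E v u))"

definition out_nbhd :: "'a set \<Rightarrow> ('a \<Rightarrow> 'a \<Rightarrow> bool) \<Rightarrow> 'a \<Rightarrow> 'a set" where
  "out_nbhd V E v = {u \<in> V. E v u}"

definition in_nbhd :: "'a set \<Rightarrow> ('a \<Rightarrow> 'a \<Rightarrow> bool) \<Rightarrow> 'a \<Rightarrow> 'a set" where
  "in_nbhd V E v = {u \<in> V. E u v}"

definition out_nbhd_set :: "'a set \<Rightarrow> ('a \<Rightarrow> 'a \<Rightarrow> bool) \<Rightarrow> 'a set \<Rightarrow> 'a set" where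
  "out_nbhd_set V E S = (\<Union>v\<in>S. out_nbhd V E v)"

definition out_nbhd2 :: "'a set \<Rightarrow> ('a \<Rightarrow> 'a \<Rightarrow> bool) \<Rightarrow> 'a set \<Rightarrow> 'a set" where
  "out_nbhd2 V E S = S \<union> out_nbhd_set V E S \<union> out_nbhd_set V E (out_nbhd_set V E S)"

definition independent :: "'a set \<Rightarrow> ('a \<Rightarrow> 'a \<Rightarrow> bool) \<Rightarrow> 'a set \<Rightarrow> bool" where
  "independent V E Q \<longleftrightarrow> Q \<subseteq> V \<and> (\<forall>u\<in>Q. \<forall>v\<in>Q. \<not> E u v)"

definition quasi_kernel :: "'a set \<Rightarrow> ('a \<Rightarrow> 'a \<Rightarrow> bool) \<Rightarrow> 'a set \<Rightarrow> bool" where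
  "quasi_kernel V E Q \<longleftrightarrow> independent V E Q \<and> out_nbhd2 V E Q = V"

end

theory Submission
  imports Defs
begin

text \<open>Fix any vertex x. Either every vertex is reached
  from x in at most two steps, and then {x} is a quasi-kernel, or some vertex w is not.
  Such a w beats x and every out-neighbour of x, so every vertex other than
  the in-neighbours of x is an out-neighbour of w.\<close>

lemma tournament_arc_in_V:
  assumes "tournament V E" and "E u v"
  shows "u \<in> V" and "v \<in> V"
  using assms unfolding tournament_def by blast+

lemma tournament_irrefl:
  assumes "tournament V E"
  shows "\<not> E v v"
  using assms unfolding tournament_def by blast

lemma tournament_arc_cases:
  assumes "tournament V E" and "u \<in> V" and "v \<in> V" and "u \<noteq> v"
  shows "E u v \<or> E v u"
  using assms unfolding tournament_def by blast

lemma mem_out_nbhd2_singleton: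
  "w \<in> out_nbhd2 V E {x} \<longleftrightarrow>
     w = x \<or> (w \<in> V \<and> E x w) \<or> (\<exists>u\<in>V. E x u \<and> E u w \<and> w \<in> V)"
  unfolding out_nbhd2_def out_nbhd_set_def out_nbhd_def by auto

lemma out_nbhd2_singleton_subset:
  assumes "x \<in> V"
  shows "out_nbhd2 V E {x} \<subseteq> V"
  using assms by (auto simp: mem_out_nbhd2_singleton)

lemma quasi_kernel_singleton:
  assumes "tournament V E" and "x \<in> V" and "out_nbhd2 V E {x} = V"
  shows "quasi_kernel V E {x}"
  using assms tournament_irrefl[OF assms(1)]
  unfolding quasi_kernel_def independent_def by simp

lemma tournament_split_at_unreached:
  assumes T: "tournament V E" and x: "x \<in> V" and w: "w \<in> V"
    and unreached: "w \<notin> out_nbhd2 V E {x}"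
  shows "V = in_nbhd V E x \<union> out_nbhd V E w"
proof -
  have w_beats_x: "E w x"
    using tournament_arc_cases[OF T w x] unreached
    by (auto simp: mem_out_nbhd2_singleton w)
  have w_beats_out_x: "E w u" if "E x u" for u
  proof -
    have u: "u \<in> V" using tournament_arc_in_V(2)[OF T that] .
    have "w \<noteq> u" and "\<not> E u w"
      using unreached that u w by (auto simp: mem_out_nbhd2_singleton)
    then show ?thesis using tournament_arc_cases[OF T w u] by blast
  qed
  have "V \<subseteq> in_nbhd V E x \<union> out_nbhd V E w"
  proof
    fix v assume v: "v \<in> V"
    have "v = x \<or> E v x \<or> E x v" using tournament_arc_cases[OF T v x] by blast
    then show "v \<in> in_nbhd V E x \<union> out_nbhd V E w"
      using v w_beats_x w_beats_out_x unfolding in_nbhd_def out_nbhd_def by blast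
  qed
  then show ?thesis unfolding in_nbhd_def out_nbhd_def by blast
qed

lemma tournament_quasi_kernel_or_split:
  assumes T: "tournament V E" and "V \<noteq> {}"
  shows "(\<exists>Q. quasi_kernel V E Q) \<or>
         (\<exists>x\<in>V. \<exists>y\<in>V. V = in_nbhd V E x \<union> out_nbhd V E y)"
proof -
  obtain x where x: "x \<in> V" using \<open>V \<noteq> {}\<close> by blast
  show ?thesis
  proof (cases "out_nbhd2 V E {x} = V")
    case True
    then show ?thesis using quasi_kernel_singleton[OF T x] by blast
  next
    case False
    then obtain w where "w \<in> V" and "w \<notin> out_nbhd2 V E {x}"
      using out_nbhd2_singleton_subset[OF x, of E] by blast
    then show ?thesis using tournament_split_at_unreached[OF T x] x by blast
  qed
qed

theorem mainTheorem9:
  fixes V :: "'a set" and E :: "'a \<Rightarrow> 'a \<Rightarrow> bool"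
  assumes "tournament V E" and "countable V" and "infinite V"
  shows "(\<exists>Q. quasi_kernel V E Q) \<or>
         (\<exists>x\<in>V. \<exists>y\<in>V. V = in_nbhd V E x \<union> out_nbhd V E y)"
  using tournament_quasi_kernel_or_split[OF assms(1)] assms(3) by blast

end
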